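(* For any $F\in\mathscr{F}_1$, $i\in[F]$ and $s\in\mathcal{S}$, letting $f_i(s)=\gamma(s_1)\gamma(s_2)\cdots\gamma(s_\rho)$ be the $\gamma$-decomposition of $f_i(s)$: (i) $\mathcal{S}_{F,i}(\lambda)\ne\emptyset$ if and only if $f_i(s_1)=\gamma(s_1)=\lambda$; (ii) for any $r=1,\dots,\rho$, if $r\ge2$ or $|\mathcal{P}^2_{F,i}|=2$, then $|\gamma(s_r)|\ge2$; (iii) for any $r=2,\dots,\rho$, writing $\gamma(s_r)=g_1g_2\cdots g_l$, we have $g_1g_2\in\bar{\mathcal{P}}^2_{F,i}(f_i(s_{r-1}))$.
   Context: $\mathcal{S}$ is a finite source alphabet with $|\mathcal{S}|\ge 2$ and $\mathcal{C}=\{0,1\}$; $\mathcal{A}^k,\mathcal{A}^{\ast},\mathcal{A}^{+}$ are sequences of length $k$, finite, positive finite length; $\lambda$ empty sequence; $\preceq$ prefix, $\prec$ proper prefix; $\mathrm{suff}(x_1\cdots x_n)=x_2\cdots x_n$. A code-tuple $F$ with $m\ge1$ code tables consists of maps $f_i:\mathcal{S}\to\mathcal{C}^{\ast}$ and $\tau_i:\mathcal{S}\to\{0,\dots,m-1\}$, $i\in[F]=\{0,\dots,m-1\}$. $f_i^{\ast}(\lambda)=\lambda$, $f_i^{\ast}(\pmb{x})=f_i(x_1)f^{\ast}_{\tau_i(x_1)}(\mathrm{suff}(\pmb{x}))$. $\mathcal{S}_{F,i}(\pmb{b})=\{s:f_i(s)=\pmb{b}\}$. For integer $k\ge0$, $\pmb{b}\in\mathcal{C}^{\ast}$: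 $\mathcal{P}^k_{F,i}(\pmb{b})$ is the set of $\pmb{c}\in\mathcal{C}^k$ such that some $\pmb{x}=x_1\cdots x_n\in\mathcal{S}^{+}$ has $f_i^{\ast}(\pmb{x})\succeq\pmb{b}\pmb{c}$ and $f_i(x_1)\succeq\pmb{b}$; $\bar{\mathcal{P}}^k_{F,i}(\pmb{b})$ the same with $f_i(x_1)\succ\pmb{b}$; $\mathcal{P}^k_{F,i}=\mathcal{P}^k_{F,i}(\lambda)$. $F\in\mathscr{F}_{2\text{-}\mathrm{dec}}$ if $\mathcal{P}^2_{F,\tau_i(s)}\cap\bar{\mathcal{P}}^2_{F,i}(f_i(s))=\emptyset$ for all $i,s$, and $\mathcal{P}^2_{F,\tau_i(s)}\cap\mathcal{P}^2_{F,\tau_i(s')}=\emptyset$ whenever $s\ne s'$, $f_i(s)=f_i(s')$. Fix $\mu:\mathcal{S}\to(0,1]$ with $\sum_s\mu(s)=1$; $Q_{i,j}(F)=\sum_{s:\tau_i(s)=j}\mu(s)$; $F\in\mathscr{F}_{\mathrm{reg}}$ if $\pmb{\pi}Q(F)=\pmb{\pi}$, $\sum_i\pi_i=1$ has a unique solution. $\mathscr{F}_1=\{F\in\mathscr{F}_{\mathrm{reg}}\cap\mathscr{F}_{2\text{-}\mathrm{dec}}:\mathcal{P}^1_{F,i}=\{0,1\}\ \forall i\in[F]\}$. $\gamma$-decomposition: for $F\in\mathscr{F}_1$, $i\in[F]$, $s\in\mathcal{S}$, the symbols $s'$ with $f_i(s')\prec f_i(s)$ have pairwise distinct codewords; list them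 together with $s$ as $s_1,\dots,s_\rho$ with $s_\rho=s$ and $f_i(s_1)\prec f_i(s_2)\prec\cdots\prec f_i(s_\rho)$, and define $\gamma(s_1)=f_i(s_1)$ and $\gamma(s_r)\in\mathcal{C}^{\ast}$ by $f_i(s_r)=f_i(s_{r-1})\gamma(s_r)$ for $r\ge2$, so that $f_i(s)=\gamma(s_1)\cdots\gamma(s_\rho)$. *)

theory Defs
  imports Complex_Main "HOL-Library.Sublist"
begin

text \<open>A code-tuple F with m code tables is represented by the number m,
  the family of encoding maps f :: nat => 's => bool list (f i = f_i) and
  the transition maps tau :: nat => 's => nat (tau i = tau_i); only indices
  i < m are meaningful.  The code alphabet C = {0,1} is bool.\<close>

definition code_tuple :: "nat \<Rightarrow> (nat \<Rightarrow> 's \<Rightarrow> bool list) \<Rightarrow> (nat \<Rightarrow> 's \<Rightarrow> nat) \<Rightarrow> bool" where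
  "code_tuple m f tau \<longleftrightarrow> 1 \<le> m \<and> (\<forall>i<m. \<forall>s. tau i s < m)"

fun fstar :: "(nat \<Rightarrow> 's \<Rightarrow> bool list) \<Rightarrow> (nat \<Rightarrow> 's \<Rightarrow> nat) \<Rightarrow> nat \<Rightarrow> 's list \<Rightarrow> bool list" where
  "fstar f tau i [] = []"
| "fstar f tau i (x # xs) = f i x @ fstar f tau (tau i x) xs"

definition Ssym :: "(nat \<Rightarrow> 's \<Rightarrow> bool list) \<Rightarrow> nat \<Rightarrow> bool list \<Rightarrow> 's set" where
  "Ssym f i b = {s. f i s = b}"

definition Pset :: "nat \<Rightarrow> (nat \<Rightarrow> 's \<Rightarrow> bool list) \<Rightarrow> (nat \<Rightarrow> 's \<Rightarrow> nat) \<Rightarrow> nat \<Rightarrow> bool list \<Rightarrow> bool list set" where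
  "Pset k f tau i b = {c. length c = k \<and>
     (\<exists>x. x \<noteq> [] \<and> prefix (b @ c) (fstar f tau i x) \<and> prefix b (f i (hd x)))}"

definition Pbar :: "nat \<Rightarrow> (nat \<Rightarrow> 's \<Rightarrow> bool list) \<Rightarrow> (nat \<Rightarrow> 's \<Rightarrow> nat) \<Rightarrow> nat \<Rightarrow> bool list \<Rightarrow> bool list set" where
  "Pbar k f tau i b = {c. length c = k \<and>
     (\<exists>x. x \<noteq> [] \<and> prefix (b @ c) (fstar f tau i x) \<and> strict_prefix b (f i (hd x)))}"

definition two_dec :: "nat \<Rightarrow> (nat \<Rightarrow> 's \<Rightarrow> bool list) \<Rightarrow> (nat \<Rightarrow> 's \<Rightarrow> nat) \<Rightarrow> bool" where
  "two_dec m f tau \<longleftrightarrow>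
     (\<forall>i<m. \<forall>s. Pset 2 f tau (tau i s) [] \<inter> Pbar 2 f tau i (f i s) = {}) \<and>
     (\<forall>i<m. \<forall>s s'. s \<noteq> s' \<and> f i s = f i s' \<longrightarrow>
        Pset 2 f tau (tau i s) [] \<inter> Pset 2 f tau (tau i s') [] = {})"

definition Qmat :: "('s::finite \<Rightarrow> real) \<Rightarrow> (nat \<Rightarrow> 's \<Rightarrow> nat) \<Rightarrow> nat \<Rightarrow> nat \<Rightarrow> real" where
  "Qmat mu tau i j = (\<Sum>s\<in>{s. tau i s = j}. mu s)"

definition regular :: "('s::finite \<Rightarrow> real) \<Rightarrow> nat \<Rightarrow> (nat \<Rightarrow> 's \<Rightarrow> nat) \<Rightarrow> bool" where
  "regular mu m tau \<longleftrightarrow>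
     (\<exists>!pi :: nat \<Rightarrow> real. (\<forall>j\<ge>m. pi j = 0) \<and>
        (\<forall>j<m. (\<Sum>i<m. pi i * Qmat mu tau i j) = pi j) \<and> (\<Sum>i<m. pi i) = 1)"

definition F1 :: "('s::finite \<Rightarrow> real) \<Rightarrow> nat \<Rightarrow> (nat \<Rightarrow> 's \<Rightarrow> bool list) \<Rightarrow> (nat \<Rightarrow> 's \<Rightarrow> nat) \<Rightarrow> bool" where
  "F1 mu m f tau \<longleftrightarrow> code_tuple m f tau \<and> regular mu m tau \<and> two_dec m f tau \<and>
     (\<forall>i<m. Pset 1 f tau i [] = {[False], [True]})"

text \<open>gamma-decomposition: the list ss = [s_1, ..., s_rho] (0-indexed in Isabelle)
  of all symbols whose codeword is a proper prefix of f i s, together with s,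
  ordered by strictly increasing codewords, with last element s.\<close>
definition gamma_chain :: "(nat \<Rightarrow> 's \<Rightarrow> bool list) \<Rightarrow> nat \<Rightarrow> 's \<Rightarrow> 's list \<Rightarrow> bool" where
  "gamma_chain f i s ss \<longleftrightarrow> ss \<noteq> [] \<and> last ss = s \<and>
     set ss = {s'. strict_prefix (f i s') (f i s)} \<union> {s} \<and>
     sorted_wrt (\<lambda>a b. strict_prefix (f i a) (f i b)) ss"

text \<open>gamma f i ss r = gamma(s_(r+1)) in the paper's 1-based numbering.\<close>
definition gamma :: "(nat \<Rightarrow> 's \<Rightarrow> bool list) \<Rightarrow> nat \<Rightarrow> 's list \<Rightarrow> nat \<Rightarrow> bool list" where
  "gamma f i ss r = (if r = 0 then f i (ss ! 0)
                     else drop (length (f i (ss ! (r - 1)))) (f i (ss ! r)))"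

end

theory Submission
  imports Defs
begin

text \<open>Every table of a code-tuple in F_1 can emit either bit first.  So if a codeword extended
  another codeword f_i(a) by a single bit c, then [c,d] would lie in Pbar^2_i(f_i(a)) for both
  bits d, while P^2 of table tau_i(a) contains some [c,d], contradicting 2-decodability; hence
  gamma(s_r) has length at least 2 for r \<ge> 2, and its first two bits lie in
  Pbar^2_i(f_i(s_(r-1))) because f_i(s_r) itself is an encoding.  If |P^2_i| = 2, a codeword [c]
  would put [c,0], [c,1] and some [1-c,e] into P^2_i, and an empty codeword f_i(a) would put
  into P^2_i all of P^2 of table tau_i(a), which has words starting with either bit, together
  with a third word that 2-decodability keeps outside it.\<close>

fun tau_star :: "(nat \<Rightarrow> 's \<Rightarrow> nat) \<Rightarrow> nat \<Rightarrow> 's list \<Rightarrow> nat" where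
  "tau_star tau j [] = j"
| "tau_star tau j (a # x) = tau_star tau (tau j a) x"

lemma fstar_append:
  "fstar f tau j (x @ y) = fstar f tau j x @ fstar f tau (tau_star tau j x) y"
  by (induction x arbitrary: j) auto

lemma tau_star_less: "code_tuple m f tau \<Longrightarrow> j < m \<Longrightarrow> tau_star tau j x < m"
  by (induction x arbitrary: j) (auto simp: code_tuple_def)

lemma PsetI:
  assumes "prefix b (f j t)" "length c = k" "prefix (b @ c) (fstar f tau j (t # x))"
  shows "c \<in> Pset k f tau j b"
  using assms unfolding Pset_def by (auto intro!: exI[of _ "t # x"])

lemma PbarI:
  assumes "strict_prefix b (f j t)" "length c = k" "prefix (b @ c) (fstar f tau j (t # x))"
  shows "c \<in> Pbar k f tau j b"
  using assms unfolding Pbar_def by (auto intro!: exI[of _ "t # x"])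

lemma Pbar_subset_Pset: "Pbar k f tau j b \<subseteq> Pset k f tau j b"
  unfolding Pbar_def Pset_def by (auto dest: prefix_order.less_imp_le)

lemma Pset_subset_if_empty_codeword:
  assumes "f j a = []"
  shows "Pset k f tau (tau j a) [] \<subseteq> Pset k f tau j []"
proof
  fix c assume "c \<in> Pset k f tau (tau j a) []"
  then obtain x where "length c = k" "prefix c (fstar f tau (tau j a) x)"
    unfolding Pset_def by auto
  with assms show "c \<in> Pset k f tau j []" by (intro PsetI[of _ f j a]) auto
qed

lemma finite_Pset: "finite (Pset k f tau j b)"
proof (rule finite_subset)
  show "Pset k f tau j b \<subseteq> {c. length c = k}" unfolding Pset_def by auto
  show "finite {c :: bool list. length c = k}"
    using finite_lists_length_eq[of "UNIV :: bool set" k] by simp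
qed

lemma take_in_Pbar:
  assumes "strict_prefix b (f j t)" "fstar f tau j (t # x) = b @ g" "k \<le> length g"
  shows "take k g \<in> Pbar k f tau j b"
  using PbarI[of b f j t "take k g" k tau x] assms
  by (simp add: take_is_prefix del: fstar.simps)

lemma three_le_card:
  assumes "finite A" "{a, b, c} \<subseteq> A" "a \<noteq> b" "a \<noteq> c" "b \<noteq> c"
  shows "3 \<le> card A"
proof -
  have "card {a, b, c} = 3" using assms(3-5) by simp
  then show ?thesis using card_mono[OF assms(1,2)] by simp
qed

lemma gamma_chain_strict_prefix:
  assumes "gamma_chain f i s ss" "p < q" "q < length ss"
  shows "strict_prefix (f i (ss ! p)) (f i (ss ! q))"
  using assms sorted_wrt_nth_less unfolding gamma_chain_def by blast

lemma gamma_chain_append_gamma: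
  assumes "gamma_chain f i s ss" "1 \<le> r" "r < length ss"
  shows "f i (ss ! r) = f i (ss ! (r - 1)) @ gamma f i ss r" and "gamma f i ss r \<noteq> []"
proof -
  have "strict_prefix (f i (ss ! (r - 1))) (f i (ss ! r))"
    using gamma_chain_strict_prefix[OF assms(1), of "r - 1" r] assms(2,3) by simp
  then show "f i (ss ! r) = f i (ss ! (r - 1)) @ gamma f i ss r" "gamma f i ss r \<noteq> []"
    using assms(2) by (auto simp: gamma_def strict_prefix_def prefix_def)
qed

lemma gamma_chain_empty_codeword:
  assumes chain: "gamma_chain f i s ss" and "f i t = []"
  shows "f i (ss ! 0) = []"
proof -
  have set_ss: "set ss = {u. strict_prefix (f i u) (f i s)} \<union> {s}" and "ss \<noteq> []"
    using chain unfolding gamma_chain_def by auto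
  obtain u where u: "u \<in> set ss" "f i u = []"
    using set_ss \<open>f i t = []\<close> by (cases "f i s") (auto simp: strict_prefix_def)
  then obtain q where "q < length ss" "ss ! q = u" by (auto simp: in_set_conv_nth)
  with u chain show ?thesis
    using gamma_chain_strict_prefix[of f i s ss 0 q] by (cases q) auto
qed

locale bit_complete_two_dec =
  fixes m :: nat and f :: "nat \<Rightarrow> 's \<Rightarrow> bool list" and tau :: "nat \<Rightarrow> 's \<Rightarrow> nat"
  assumes code_tuple: "code_tuple m f tau"
    and two_dec: "two_dec m f tau"
    and Pset1_full: "\<And>j. j < m \<Longrightarrow> Pset 1 f tau j [] = {[False], [True]}"
begin

lemma tau_less: "j < m \<Longrightarrow> tau j a < m"
  using code_tuple by (simp add: code_tuple_def)

lemma Pset2_Pbar2_disjoint: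
  "j < m \<Longrightarrow> Pset 2 f tau (tau j a) [] \<inter> Pbar 2 f tau j (f j a) = {}"
  using two_dec by (simp add: two_dec_def)

lemma Pset2_disjoint:
  "j < m \<Longrightarrow> a \<noteq> a' \<Longrightarrow> f j a = f j a' \<Longrightarrow>
    Pset 2 f tau (tau j a) [] \<inter> Pset 2 f tau (tau j a') [] = {}"
  using two_dec by (simp add: two_dec_def)

lemma exists_fstar_prefix:
  assumes "j < m"
  shows "\<exists>x. prefix [d] (fstar f tau j x)"
proof -
  have "[d] \<in> Pset 1 f tau j []" using Pset1_full[OF assms] by (cases d) auto
  then show ?thesis unfolding Pset_def by auto
qed

lemma exists_Cons_in_Pset2:
  assumes "j < m"
  shows "\<exists>e. [d, e] \<in> Pset 2 f tau j []"
proof -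
  obtain x where x: "prefix [d] (fstar f tau j x)"
    using exists_fstar_prefix[OF assms] by blast
  then obtain w where w: "fstar f tau j x = d # w" by (auto simp: prefix_def)
  obtain e y where y: "prefix [e] (fstar f tau (tau_star tau j x) y)"
    using exists_fstar_prefix[OF tau_star_less[OF code_tuple assms]] by blast
  obtain c where "take 2 (fstar f tau j (x @ y)) = [d, c]"
    using w y by (cases w) (auto simp: fstar_append prefix_def)
  then have "prefix [d, c] (fstar f tau j (x @ y))" by (metis take_is_prefix)
  moreover have "x \<noteq> []" using x by auto
  ultimately have "[d, c] \<in> Pset 2 f tau j []" unfolding Pset_def
    by (auto intro!: exI[of _ "x @ y"])
  then show ?thesis by blast
qed

lemma Pbar2_one_bit_extension:
  assumes "j < m" "f j t = b @ [c]"
  shows "[c, d] \<in> Pbar 2 f tau j b"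
proof -
  obtain x where "prefix [d] (fstar f tau (tau j t) x)"
    using exists_fstar_prefix[OF tau_less[OF assms(1)]] by blast
  with assms(2) show ?thesis
    by (intro PbarI[of b f j t _ _ tau x]) (auto simp: strict_prefix_def prefix_def)
qed

lemma no_one_bit_extension: "j < m \<Longrightarrow> f j t \<noteq> f j a @ [c]"
proof
  assume "j < m" "f j t = f j a @ [c]"
  obtain d where "[c, d] \<in> Pset 2 f tau (tau j a) []"
    using exists_Cons_in_Pset2[OF tau_less[OF \<open>j < m\<close>]] by blast
  moreover have "[c, d] \<in> Pbar 2 f tau j (f j a)"
    using Pbar2_one_bit_extension[OF \<open>j < m\<close> \<open>f j t = f j a @ [c]\<close>] .
  ultimately show False using Pset2_Pbar2_disjoint[OF \<open>j < m\<close>, of a] by blast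
qed

lemma three_le_card_Pset2_if_singleton_codeword:
  assumes "j < m" "f j a = [c]"
  shows "3 \<le> card (Pset 2 f tau j [])"
proof -
  obtain e where "[\<not> c, e] \<in> Pset 2 f tau j []" using exists_Cons_in_Pset2[OF assms(1)] by blast
  moreover have "[c, d] \<in> Pset 2 f tau j []" for d
  proof -
    have "[c, d] \<in> Pbar 2 f tau j []" using Pbar2_one_bit_extension[OF assms(1)] assms(2) by simp
    then show ?thesis using Pbar_subset_Pset by blast
  qed
  ultimately show ?thesis by (intro three_le_card[OF finite_Pset, of "[c, False]" "[c, True]"]) auto
qed

lemma three_le_card_Pset2_if_empty_codeword:
  assumes j: "j < m" and a: "f j a = []" and "t \<noteq> a"
  shows "3 \<le> card (Pset 2 f tau j [])"
proof -
  let ?P = "Pset 2 f tau (tau j a) []"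
  have sub: "?P \<subseteq> Pset 2 f tau j []" by (rule Pset_subset_if_empty_codeword[of f j a, OF a])
  obtain e1 e2 where e: "[True, e1] \<in> ?P" "[False, e2] \<in> ?P"
    using exists_Cons_in_Pset2[OF tau_less[OF j]] by blast
  have "\<exists>w \<in> Pset 2 f tau j []. w \<notin> ?P"
  proof (cases "\<exists>u. f j u \<noteq> []")
    case True
    then obtain u where u: "f j u \<noteq> []" by blast
    obtain x where "prefix [True] (fstar f tau (tau j u) x)"
      using exists_fstar_prefix[OF tau_less[OF j]] by blast
    with u have len: "length (fstar f tau j (u # x)) \<ge> 2"
      by (cases "f j u") (auto simp: prefix_def)
    have "strict_prefix (f j a) (f j u)" using u a by (simp add: strict_prefix_def)
    then have w: "take 2 (fstar f tau j (u # x)) \<in> Pbar 2 f tau j (f j a)"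
      by (rule take_in_Pbar[where x = x]) (use len a in simp_all)
    then have "take 2 (fstar f tau j (u # x)) \<notin> ?P"
      using Pset2_Pbar2_disjoint[OF j, of a] by blast
    moreover have "take 2 (fstar f tau j (u # x)) \<in> Pset 2 f tau j []"
      using w a Pbar_subset_Pset by fastforce
    ultimately show ?thesis by blast
  next
    case False
    then have t: "f j t = []" by blast
    obtain w where w: "w \<in> Pset 2 f tau (tau j t) []"
      using exists_Cons_in_Pset2[OF tau_less[OF j]] by blast
    have "w \<in> Pset 2 f tau j []"
      using w Pset_subset_if_empty_codeword[of f j t, OF t] by blast
    moreover have "w \<notin> ?P" using w Pset2_disjoint[OF j \<open>t \<noteq> a\<close>] t a by auto
    ultimately show ?thesis by blast
  qed
  then obtain w where "w \<in> Pset 2 f tau j []" "w \<notin> ?P" by blast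
  with e sub show ?thesis
    by (intro three_le_card[OF finite_Pset, of "[True, e1]" "[False, e2]" w]) auto
qed

lemma two_le_length_codeword_if_card_Pset2:
  assumes "j < m" "card (Pset 2 f tau j []) = 2" "t \<noteq> a"
  shows "2 \<le> length (f j a)"
proof (rule ccontr)
  assume "\<not> 2 \<le> length (f j a)"
  then consider "f j a = []" | c where "f j a = [c]"
    by (cases "f j a") (auto simp: Suc_le_eq)
  then have "3 \<le> card (Pset 2 f tau j [])"
  proof cases
    case 1
    then show ?thesis by (rule three_le_card_Pset2_if_empty_codeword[OF assms(1) _ assms(3)])
  next
    case 2
    then show ?thesis by (rule three_le_card_Pset2_if_singleton_codeword[OF assms(1)])
  qed
  with assms(2) show False by simp
qed

lemma two_le_length_gamma:
  assumes chain: "gamma_chain f i s ss" and "i < m" "1 \<le> r" "r < length ss"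
  shows "2 \<le> length (gamma f i ss r)"
proof (rule ccontr)
  note append_gamma = gamma_chain_append_gamma[OF chain \<open>1 \<le> r\<close> \<open>r < length ss\<close>]
  assume "\<not> 2 \<le> length (gamma f i ss r)"
  with append_gamma(2) obtain c where "gamma f i ss r = [c]"
    by (cases "gamma f i ss r") (auto simp: Suc_le_eq)
  then show False using append_gamma(1) no_one_bit_extension[OF \<open>i < m\<close>] by simp
qed

lemma take2_gamma_in_Pbar:
  assumes chain: "gamma_chain f i s ss" and "i < m" "1 \<le> r" "r < length ss"
  shows "take 2 (gamma f i ss r) \<in> Pbar 2 f tau i (f i (ss ! (r - 1)))"
  using take_in_Pbar[of _ f i "ss ! r" tau "[]"] gamma_chain_append_gamma[OF chain assms(3,4)]
    two_le_length_gamma[OF assms] by (simp add: strict_prefix_def)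

end

theorem lemma16:
  fixes mu :: "'s::finite \<Rightarrow> real"
    and m :: nat and f :: "nat \<Rightarrow> 's \<Rightarrow> bool list" and tau :: "nat \<Rightarrow> 's \<Rightarrow> nat"
    and i :: nat and s :: 's and ss :: "'s list"
  assumes card_S: "card (UNIV :: 's set) \<ge> 2"
    and mu_pos: "\<And>x. 0 < mu x \<and> mu x \<le> 1"
    and mu_sum: "(\<Sum>x\<in>UNIV. mu x) = 1"
    and F: "F1 mu m f tau"
    and i: "i < m"
    and chain: "gamma_chain f i s ss"
  shows "(Ssym f i [] \<noteq> {} \<longleftrightarrow> (f i (ss ! 0) = [] \<and> gamma f i ss 0 = []))
    \<and> (\<forall>r<length ss. (r \<ge> 1 \<or> card (Pset 2 f tau i []) = 2) \<longrightarrow> length (gamma f i ss r) \<ge> 2)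
    \<and> (\<forall>r. 1 \<le> r \<and> r < length ss \<longrightarrow>
          take 2 (gamma f i ss r) \<in> Pbar 2 f tau i (f i (ss ! (r - 1))))"
proof -
  interpret bit_complete_two_dec m f tau
    using F by unfold_locales (auto simp: F1_def)
  have gamma_0: "gamma f i ss 0 = f i (ss ! 0)" by (simp add: gamma_def)
  have "\<not> (\<forall>u v :: 's. u = v)"
    using card_S card_le_Suc0_iff_eq[of "UNIV :: 's set"] by auto
  then obtain t :: 's where "t \<noteq> ss ! 0" by (metis (full_types))
  then have "2 \<le> length (gamma f i ss 0)" if "card (Pset 2 f tau i []) = 2"
    using two_le_length_codeword_if_card_Pset2[OF i that] gamma_0 by simp
  then have "2 \<le> length (gamma f i ss r)"
    if "r < length ss" "1 \<le> r \<or> card (Pset 2 f tau i []) = 2" for r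
    using that two_le_length_gamma[OF chain i] by (cases r) auto
  moreover have "Ssym f i [] \<noteq> {} \<longleftrightarrow> f i (ss ! 0) = [] \<and> gamma f i ss 0 = []"
    using gamma_chain_empty_codeword[OF chain] gamma_0 by (auto simp: Ssym_def)
  ultimately show ?thesis using take2_gamma_in_Pbar[OF chain i] by blast
qed

end
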